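(* Let $\Phi\in C^1(\mathbb{R})$ be convex. Then for every real-valued function $f$ on $\mathbb{R}^d$ for which the quantities below are defined, \[ \Phi'(f)\,Lf-L\Phi(f)\ge0\quad\text{pointwise}, \] where $L=\ln(I-\Delta)$.
   Context: $L=\ln(I-\Delta)$ is the Fourier multiplier with symbol $\ln(1+|\xi|^2)$ (symbol of $-\Delta$ identified with $|\xi|^2$); equivalently, via the heat semigroup $e^{s\Delta}$ (convolution with the heat kernel $H(s,\cdot)$), $Lf(x)=\int_0^\infty\big(f(x)-e^{s\Delta}f(x)\big)e^{-s}\frac{ds}{s}$. *)

theory Defs
  imports "HOL-Analysis.Analysis"
begin

definition heat_kernel :: "real \<Rightarrow> 'a::euclidean_space \<Rightarrow> real" where
  "heat_kernel s z = (4 * pi * s) powr (- real DIM('a) / 2) * exp (- (norm z)\<^sup>2 / (4 * s))"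

definition heat_sg :: "real \<Rightarrow> ('a::euclidean_space \<Rightarrow> real) \<Rightarrow> 'a \<Rightarrow> real" where
  "heat_sg s f x = (\<integral>y. heat_kernel s (x - y) * f y \<partial>lborel)"

text \<open>L = ln(I - Delta): L f (x) = integral over (0,oo) of (f(x) - e^{s Delta} f(x)) e^{-s} ds/s.\<close>
definition logL :: "('a::euclidean_space \<Rightarrow> real) \<Rightarrow> 'a \<Rightarrow> real" where
  "logL f x = (LINT s:{0<..}|lborel. (f x - heat_sg s f x) * exp (- s) / s)"

text \<open>"The quantities defining L f (x) are defined": all the integrals exist.\<close>
definition logL_defined :: "('a::euclidean_space \<Rightarrow> real) \<Rightarrow> 'a \<Rightarrow> bool" where
  "logL_defined f x \<longleftrightarrow>
     (\<forall>s>0. integrable lborel (\<lambda>y. heat_kernel s (x - y) * f y)) \<and>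
     set_integrable lborel {0<..} (\<lambda>s. (f x - heat_sg s f x) * exp (- s) / s)"

end

theory Submission imports Defs "HOL-Probability.Distributions" begin

text \<open>For every s > 0 the heat semigroup averages against a probability density (a product of
  one-dimensional Gaussians). For convex \<open>\<Phi>\<close>, the tangent line at \<open>f x\<close> lies below \<open>\<Phi>\<close>, so
  averaging gives the Jensen-type bound
  \<open>\<Phi>'(f x) (f x - e\<^sup>s\<^sup>\<Delta> f x) \<ge> \<Phi>(f x) - e\<^sup>s\<^sup>\<Delta> \<Phi>(f) x\<close>.
  Integrating this against the positive weight \<open>e\<^sup>-\<^sup>s / s\<close> over \<open>s > 0\<close> gives the theorem.\<close>

lemma heat_kernel_nonneg: "s > 0 \<Longrightarrow> heat_kernel s z \<ge> 0"
  unfolding heat_kernel_def by simp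

lemma heat_kernel_eq_prod_normal_density:
  fixes x y :: "'a::euclidean_space"
  assumes s: "s > 0"
  shows "heat_kernel s (x - y) = (\<Prod>b\<in>Basis. normal_density (x \<bullet> b) (sqrt (2 * s)) (y \<bullet> b))"
proof -
  have norm_sq: "(norm (x - y))\<^sup>2 = (\<Sum>b\<in>Basis. ((y \<bullet> b) - (x \<bullet> b))\<^sup>2)"
    unfolding power2_norm_eq_inner
    by (subst euclidean_inner) (intro sum.cong refl; simp add: inner_diff_left power2_eq_square algebra_simps)
  have pos: "4 * pi * s > 0"
    using s by simp
  have "(\<Prod>b\<in>Basis. normal_density (x \<bullet> b) (sqrt (2 * s)) (y \<bullet> b))
      = (\<Prod>b\<in>Basis. (1 / sqrt (4 * pi * s)) * exp (- ((y \<bullet> b) - (x \<bullet> b))\<^sup>2 / (4 * s)))"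
    using s by (intro prod.cong refl) (simp add: normal_density_def)
  also have "\<dots> = (1 / sqrt (4 * pi * s)) ^ DIM('a)
                   * exp (\<Sum>b\<in>Basis. - ((y \<bullet> b) - (x \<bullet> b))\<^sup>2 / (4 * s))"
    by (simp only: prod.distrib prod_constant exp_sum[OF finite_Basis])
  also have "(\<Sum>b\<in>Basis. - ((y \<bullet> b) - (x \<bullet> b))\<^sup>2 / (4 * s)) = - (norm (x - y))\<^sup>2 / (4 * s)"
    by (simp add: norm_sq sum_divide_distrib sum_negf)
  also have "(1 / sqrt (4 * pi * s)) ^ DIM('a) = (4 * pi * s) powr (- real DIM('a) / 2)"
  proof -
    have root: "(4 * pi * s) powr (- (1/2)) = 1 / sqrt (4 * pi * s)"
      by (simp only: powr_minus powr_half_sqrt[OF less_imp_le[OF pos]] inverse_eq_divide)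
    have "(1 / sqrt (4 * pi * s)) ^ DIM('a) = (4 * pi * s) powr (real DIM('a) * - (1/2))"
      unfolding root[symmetric] by (rule powr_power) (use s in simp)
    then show ?thesis
      by simp
  qed
  finally show ?thesis
    unfolding heat_kernel_def by simp
qed

lemma has_bochner_integral_heat_kernel:
  fixes x :: "'a::euclidean_space"
  assumes s: "s > 0"
  shows "has_bochner_integral lborel (\<lambda>y. heat_kernel s (x - y)) 1"
proof (rule has_bochner_integral_nn_integral)
  show "(\<lambda>y. heat_kernel s (x - y)) \<in> borel_measurable lborel"
    unfolding heat_kernel_def by measurable
  show "AE y in lborel. 0 \<le> heat_kernel s (x - y)"
    using s heat_kernel_nonneg by auto
  have sd: "sqrt (2 * s) > 0"
    using s by simp
  have normal_mass: "(\<integral>\<^sup>+t. ennreal (normal_density m (sqrt (2 * s)) t) \<partial>lborel) = 1" for m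
    by (subst nn_integral_eq_integral)
       (auto simp: integrable_normal_density[OF sd] integral_normal_density[OF sd])
  have "(\<integral>\<^sup>+y. ennreal (heat_kernel s (x - y)) \<partial>lborel)
      = (\<integral>\<^sup>+y. (\<Prod>b\<in>Basis. ennreal (normal_density (x \<bullet> b) (sqrt (2 * s)) (y \<bullet> b))) \<partial>lborel)"
    using s by (intro nn_integral_cong) (simp add: heat_kernel_eq_prod_normal_density prod_ennreal)
  also have "\<dots> = (\<Prod>b\<in>Basis. (\<integral>\<^sup>+t. ennreal (normal_density (x \<bullet> b) (sqrt (2 * s)) t) \<partial>lborel))"
    by (rule nn_integral_lborel_prod) auto
  also have "\<dots> = 1"
    by (simp add: normal_mass)
  finally show "(\<integral>\<^sup>+y. ennreal (heat_kernel s (x - y)) \<partial>lborel) = ennreal 1"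
    by simp
qed simp

lemma tangent_le_integral_density:
  fixes k g :: "'b \<Rightarrow> real" and \<Phi> :: "real \<Rightarrow> real"
  assumes k: "has_bochner_integral M k 1" and k_nonneg: "\<And>y. k y \<ge> 0"
    and int_g: "integrable M (\<lambda>y. k y * g y)"
    and int_\<Phi>g: "integrable M (\<lambda>y. k y * \<Phi> (g y))"
    and tangent: "\<And>t. c * (t - a) \<le> \<Phi> t - \<Phi> a"
  shows "\<Phi> a + c * ((\<integral>y. k y * g y \<partial>M) - a) \<le> (\<integral>y. k y * \<Phi> (g y) \<partial>M)"
proof -
  have int_k: "integrable M k" and mass: "(\<integral>y. k y \<partial>M) = 1"
    using k by (simp_all add: has_bochner_integral_iff)
  have "\<Phi> a + c * ((\<integral>y. k y * g y \<partial>M) - a)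
      = (\<Phi> a - c * a) * (\<integral>y. k y \<partial>M) + c * (\<integral>y. k y * g y \<partial>M)"
    by (simp add: mass algebra_simps)
  also have "\<dots> = (\<integral>y. (\<Phi> a - c * a) * k y + c * (k y * g y) \<partial>M)"
    using int_k int_g by simp
  also have "\<dots> \<le> (\<integral>y. k y * \<Phi> (g y) \<partial>M)"
  proof (rule integral_mono)
    show "integrable M (\<lambda>y. (\<Phi> a - c * a) * k y + c * (k y * g y))"
      using int_k int_g by simp
    show "(\<Phi> a - c * a) * k y + c * (k y * g y) \<le> k y * \<Phi> (g y)" for y
      using mult_left_mono[OF tangent[of "g y"] k_nonneg[of y]] by (simp add: algebra_simps)
  qed (rule int_\<Phi>g)
  finally show ?thesis .
qed

lemma heat_sg_convex_tangent_ineq: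
  fixes f :: "'a::euclidean_space \<Rightarrow> real" and \<Phi> :: "real \<Rightarrow> real"
  assumes s: "s > 0" and convex: "convex_on UNIV \<Phi>"
    and deriv: "(\<Phi> has_real_derivative c) (at (f x))"
    and int_f: "integrable lborel (\<lambda>y. heat_kernel s (x - y) * f y)"
    and int_\<Phi>f: "integrable lborel (\<lambda>y. heat_kernel s (x - y) * \<Phi> (f y))"
  shows "\<Phi> (f x) - heat_sg s (\<lambda>y. \<Phi> (f y)) x \<le> c * (f x - heat_sg s f x)"
proof -
  have "c * (t - f x) \<le> \<Phi> t - \<Phi> (f x)" for t
    by (rule convex_on_imp_above_tangent[OF convex _ _ _ deriv]) auto
  from tangent_le_integral_density[OF has_bochner_integral_heat_kernel[OF s]
      heat_kernel_nonneg[OF s] int_f int_\<Phi>f this]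
  show ?thesis
    unfolding heat_sg_def by (simp add: algebra_simps)
qed

lemma logL_comp_convex_le:
  fixes f :: "'a::euclidean_space \<Rightarrow> real" and \<Phi> :: "real \<Rightarrow> real"
  assumes convex: "convex_on UNIV \<Phi>" and deriv: "(\<Phi> has_real_derivative c) (at (f x))"
    and defined_f: "logL_defined f x" and defined_\<Phi>f: "logL_defined (\<lambda>y. \<Phi> (f y)) x"
  shows "logL (\<lambda>y. \<Phi> (f y)) x \<le> c * logL f x"
proof -
  have int_f: "set_integrable lborel {0<..} (\<lambda>s. (f x - heat_sg s f x) * exp (- s) / s)"
    and int_\<Phi>f: "set_integrable lborel {0<..}
                   (\<lambda>s. (\<Phi> (f x) - heat_sg s (\<lambda>y. \<Phi> (f y)) x) * exp (- s) / s)"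
    and int_heat_f: "\<And>s. s > 0 \<Longrightarrow> integrable lborel (\<lambda>y. heat_kernel s (x - y) * f y)"
    and int_heat_\<Phi>f: "\<And>s. s > 0 \<Longrightarrow> integrable lborel (\<lambda>y. heat_kernel s (x - y) * \<Phi> (f y))"
    using defined_f defined_\<Phi>f unfolding logL_defined_def by blast+
  have weighted_ineq: "(\<Phi> (f x) - heat_sg s (\<lambda>y. \<Phi> (f y)) x) * exp (- s) / s
      \<le> c * ((f x - heat_sg s f x) * exp (- s) / s)" if s: "s > 0" for s
  proof -
    have heat_ineq: "\<Phi> (f x) - heat_sg s (\<lambda>y. \<Phi> (f y)) x \<le> c * (f x - heat_sg s f x)"
      by (rule heat_sg_convex_tangent_ineq[where f = f and x = x,
            OF s convex deriv int_heat_f[OF s] int_heat_\<Phi>f[OF s]])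
    have weight_nonneg: "0 \<le> exp (- s) / s"
      using s by simp
    show ?thesis
      using mult_right_mono[OF heat_ineq weight_nonneg] by (simp add: mult.assoc)
  qed
  have "logL (\<lambda>y. \<Phi> (f y)) x \<le> (LINT s:{0<..}|lborel. c * ((f x - heat_sg s f x) * exp (- s) / s))"
    unfolding logL_def
    by (rule set_integral_mono[OF int_\<Phi>f set_integrable_mult_right[OF int_f] weighted_ineq]) simp
  also have "\<dots> = c * logL f x"
    unfolding logL_def by (rule set_integral_mult_right)
  finally show ?thesis .
qed

theorem lemma4p3:
  fixes \<Phi> :: "real \<Rightarrow> real" and f :: "'a::euclidean_space \<Rightarrow> real" and x :: 'a
  assumes "\<And>t. \<Phi> differentiable (at t)"
    and "continuous_on UNIV (deriv \<Phi>)"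
    and "convex_on UNIV \<Phi>"
    and "logL_defined f x"
    and "logL_defined (\<lambda>y. \<Phi> (f y)) x"
  shows "deriv \<Phi> (f x) * logL f x - logL (\<lambda>y. \<Phi> (f y)) x \<ge> 0"
proof -
  have "(\<Phi> has_real_derivative deriv \<Phi> (f x)) (at (f x))"
    using assms(1) DERIV_deriv_iff_real_differentiable by blast
  from logL_comp_convex_le[OF assms(3) this assms(4,5)]
  show ?thesis
    by simp
qed

end
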